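(* Let $x,y,z$ be positive integers with $\gcd(x,y)=1$. If there is a prime $p\ge 3$ such that $x^{p}+y^{p}=z^{p}$, then $z+2\le x+y\le 2(z-1)$. *)

theory Defs
  imports "HOL-Computational_Algebra.Primes"
begin

end

theory Submission
  imports Defs
begin

text \<open>Since \<open>x\<^sup>p + y\<^sup>p < (x + y)\<^sup>p\<close> for \<open>p \<ge> 2\<close>, we get \<open>z < x + y\<close>; reducing the equation mod 2 shows that \<open>x + y\<close> and \<open>z\<close>
  have the same parity, so in fact \<open>z + 2 \<le> x + y\<close>.  The upper bound holds because
  \<open>x\<close> and \<open>y\<close> are both smaller than \<open>z\<close>.\<close>

lemma power_add_power_less_power_add:
  fixes a b :: "'a :: linordered_semidom"
  assumes "2 \<le> n" and "0 < a" and "0 < b"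
  shows "a ^ n + b ^ n < (a + b) ^ n"
proof -
  obtain m where n: "n = Suc m" and "0 < m"
    using assms(1) by (cases n) auto
  have "a ^ m < (a + b) ^ m"
    using \<open>0 < m\<close> assms(2,3) by (intro power_strict_mono) auto
  moreover have "b ^ m \<le> (a + b) ^ m"
    using assms(2,3) by (intro power_mono) auto
  ultimately have "a ^ m * a + b ^ m * b < (a + b) ^ m * a + (a + b) ^ m * b"
    using assms(2,3) by (intro add_less_le_mono mult_strict_right_mono mult_right_mono) auto
  then show ?thesis
    by (simp add: n algebra_simps)
qed

theorem theorem5:
  fixes x y z p :: nat
  assumes "x > 0" and "y > 0" and "z > 0"
    and "gcd x y = 1"
    and "prime p" and "p \<ge> 3"
    and "x ^ p + y ^ p = z ^ p"
  shows "z + 2 \<le> x + y \<and> x + y \<le> 2 * (z - 1)"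
proof -
  have "0 < x ^ p" and "0 < y ^ p"
    using assms(1,2) by simp_all
  with assms(7) have "x ^ p < z ^ p" and "y ^ p < z ^ p"
    by linarith+
  then have "x < z" and "y < z"
    by (auto intro: power_less_imp_less_base)
  from assms(1,2,6,7) have "z ^ p < (x + y) ^ p"
    using power_add_power_less_power_add[of p x y] by simp
  then have "z < x + y"
    by (rule power_less_imp_less_base) simp
  moreover have "even (x + y) \<longleftrightarrow> even z"
    using arg_cong[OF assms(7), of even] assms(6) by (simp add: even_power)
  ultimately have "z + 2 \<le> x + y"
    by (cases "x + y = z + 1") auto
  with \<open>x < z\<close> \<open>y < z\<close> show ?thesis
    by linarith
qed

end
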